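(* Let $\mathcal{I}$ be a differentially homogeneous prime differential ideal of $\mathcal{F}\{y_0,\ldots,y_n\}$ (with $\mathcal{I}\neq\mathcal{F}\{y_0,\ldots,y_n\}$). Then every parametric set of $\mathcal{I}$ is nonempty; i.e., there is some index $i$ with $\mathcal{I}\cap\mathcal{F}\{y_i\}=\{0\}$.
   Context: $\mathcal{F}$ is an ordinary differential field. For a differential ideal $\mathcal{I}$ of $\mathcal{F}\{\mathbb{Y}\}=\mathcal{F}\{y_0,\ldots,y_n\}$, $\mathcal{I}:(\mathbb{Y})=\{f: y_jf\in\mathcal{I}\text{ for all }0\le j\le n\}$. $\mathcal{I}$ is called differentially homogeneous if $\mathcal{I}:(\mathbb{Y})=\mathcal{I}$ and for every $P\in\mathcal{I}$ and a new differential indeterminate $t$, $P(ty_0,\ldots,ty_n)$ belongs to the differential ideal generated by $\mathcal{I}$ in $\mathcal{F}\{t,y_0,\ldots,y_n\}$ (i.e. $P(t\mathbb{Y})\in\mathcal{F}\{t\}\mathcal{I}$). A subset $\mathbb{U}\subset\{y_0,\ldots,y_n\}$ is differentially independent modulo $\mathcal{I}$ if $\mathcal{I}\cap\mathcal{F}\{\mathbb{U}\}=\{0\}$; a parametric set of $\mathcal{I}$ is a maximal such subset. *)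

theory Defs
  imports Main "HOL-Library.Poly_Mapping"
begin

text \<open>Differential polynomials over a coefficient field 'a in the differential
indeterminates indexed by 'v: ordinary polynomials in the (infinitely many)
algebraic indeterminates (v,k), where (v,k) stands for the k-th derivative of y_v.\<close>

type_synonym ('v, 'a) dpoly = "(('v \<times> nat) \<Rightarrow>\<^sub>0 nat) \<Rightarrow>\<^sub>0 'a"

definition differential_field :: "('a::field \<Rightarrow> 'a) \<Rightarrow> bool" where
  "differential_field \<delta> \<longleftrightarrow>
     (\<forall>a b. \<delta> (a + b) = \<delta> a + \<delta> b) \<and> (\<forall>a b. \<delta> (a * b) = a * \<delta> b + \<delta> a * b)"

definition dp_const :: "'a::field \<Rightarrow> ('v, 'a) dpoly" where
  "dp_const c = Poly_Mapping.single 0 c"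

definition dp_var :: "'v \<Rightarrow> nat \<Rightarrow> ('v, 'a::field) dpoly" where
  "dp_var v k = Poly_Mapping.single (Poly_Mapping.single (v, k) 1) 1"

definition dmono_deriv :: "(('v \<times> nat) \<Rightarrow>\<^sub>0 nat) \<Rightarrow> ('v, 'a::field) dpoly" where
  "dmono_deriv m = (\<Sum>w\<in>Poly_Mapping.keys m. of_nat (Poly_Mapping.lookup m w) *
      Poly_Mapping.single (m - Poly_Mapping.single w 1 + Poly_Mapping.single (fst w, Suc (snd w)) 1) 1)"

definition dp_deriv :: "('a::field \<Rightarrow> 'a) \<Rightarrow> ('v, 'a) dpoly \<Rightarrow> ('v, 'a) dpoly" where
  "dp_deriv \<delta> p = (\<Sum>m\<in>Poly_Mapping.keys p. Poly_Mapping.single m (\<delta> (Poly_Mapping.lookup p m))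
                                 + dp_const (Poly_Mapping.lookup p m) * dmono_deriv m)"

definition dp_subst :: "('v \<times> nat \<Rightarrow> ('w, 'a::field) dpoly) \<Rightarrow> ('v, 'a) dpoly \<Rightarrow> ('w, 'a) dpoly" where
  "dp_subst \<sigma> p = (\<Sum>m\<in>Poly_Mapping.keys p. dp_const (Poly_Mapping.lookup p m) * (\<Prod>w\<in>Poly_Mapping.keys m. \<sigma> w ^ Poly_Mapping.lookup m w))"

definition is_ideal :: "('a::comm_ring_1) set \<Rightarrow> bool" where
  "is_ideal I \<longleftrightarrow> 0 \<in> I \<and> (\<forall>a\<in>I. \<forall>b\<in>I. a + b \<in> I) \<and> (\<forall>r. \<forall>a\<in>I. r * a \<in> I)"

definition is_diff_ideal :: "('a::field \<Rightarrow> 'a) \<Rightarrow> ('v, 'a) dpoly set \<Rightarrow> bool" where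
  "is_diff_ideal \<delta> I \<longleftrightarrow> is_ideal I \<and> (\<forall>a\<in>I. dp_deriv \<delta> a \<in> I)"

definition is_prime_ideal :: "('a::comm_ring_1) set \<Rightarrow> bool" where
  "is_prime_ideal I \<longleftrightarrow> is_ideal I \<and> I \<noteq> UNIV \<and> (\<forall>a b. a * b \<in> I \<longrightarrow> a \<in> I \<or> b \<in> I)"

definition diff_ideal_gen :: "('a::field \<Rightarrow> 'a) \<Rightarrow> ('v, 'a) dpoly set \<Rightarrow> ('v, 'a) dpoly set" where
  "diff_ideal_gen \<delta> S = \<Inter>{J. is_diff_ideal \<delta> J \<and> S \<subseteq> J}"

definition colon_vars :: "('v, 'a::field) dpoly set \<Rightarrow> ('v, 'a) dpoly set" where
  "colon_vars I = {f. \<forall>j. dp_var j 0 * f \<in> I}"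

text \<open>Embedding F{Y} into F{t,Y}; the new indeterminate t is indexed by None, y_j by Some j.\<close>
definition embed_tY :: "('v, 'a::field) dpoly \<Rightarrow> ('v option, 'a) dpoly" where
  "embed_tY = dp_subst (\<lambda>(j, k). dp_var (Some j) k)"

text \<open>P(tY): the differential substitution y_j \<mapsto> t y_j, so y_j^(k) \<mapsto> (t y_j)^(k).\<close>
definition scale_tY :: "('a::field \<Rightarrow> 'a) \<Rightarrow> ('v, 'a) dpoly \<Rightarrow> ('v option, 'a) dpoly" where
  "scale_tY \<delta> = dp_subst (\<lambda>(j, k). (dp_deriv \<delta> ^^ k) (dp_var None 0 * dp_var (Some j) 0))"

definition diff_homogeneous :: "('a::field \<Rightarrow> 'a) \<Rightarrow> ('v, 'a) dpoly set \<Rightarrow> bool" where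
  "diff_homogeneous \<delta> I \<longleftrightarrow> colon_vars I = I \<and>
     (\<forall>P\<in>I. scale_tY \<delta> P \<in> diff_ideal_gen \<delta> (embed_tY ` I))"

definition dp_sub :: "'v set \<Rightarrow> ('v, 'a::field) dpoly set" where
  "dp_sub U = {p. \<forall>m\<in>Poly_Mapping.keys p. \<forall>w\<in>Poly_Mapping.keys m. fst w \<in> U}"

definition diff_indep_mod :: "('v, 'a::field) dpoly set \<Rightarrow> 'v set \<Rightarrow> bool" where
  "diff_indep_mod I U \<longleftrightarrow> I \<inter> dp_sub U = {0}"

definition parametric_set :: "('v, 'a::field) dpoly set \<Rightarrow> 'v set \<Rightarrow> bool" where
  "parametric_set I U \<longleftrightarrow> diff_indep_mod I U \<and> (\<forall>V. U \<subset> V \<longrightarrow> \<not> diff_indep_mod I V)"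

end

(*
  Suppose every y_i satisfies some nonzero p_i in I \<inter> F{y_i}.  By differential homogeneity p_i(tY)
  lies in the differential ideal generated by I in F{t,Y}, so it is an F{t,Y}-linear combination of
  elements of I.  Regard F{t,Y} as a polynomial ring in t, t', t'', ... over F{Y}: taking the
  coefficient of a fixed t-monomial then maps that ideal back into I.  Since
  (t y_i)^(k) = t^(k) y_i + (terms of lower order in t), a monomial y_i^(k_1) ... y_i^(k_d) of p_i of
  maximal weight among those of degree d is the only monomial of p_i that contributes to the
  coefficient of t^(k_1) ... t^(k_d) in p_i(tY); that coefficient is c y_i^d with c \<noteq> 0.  Hence
  y_i^d \<in> I, so y_i \<in> I as I is prime, and 1 \<in> I : (Y) = I, contradicting I \<noteq> F{Y}.
  So some {y_i} is differentially independent, and the empty set is never maximal.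
*)

theory Submission
  imports Defs
begin

section \<open>Linear extension along finitely supported functions\<close>

definition lin_ext :: "('k \<Rightarrow> 'b::zero \<Rightarrow> 'c::comm_monoid_add) \<Rightarrow> ('k \<Rightarrow>\<^sub>0 'b) \<Rightarrow> 'c" where
  "lin_ext F p = (\<Sum>k\<in>Poly_Mapping.keys p. F k (Poly_Mapping.lookup p k))"

lemma lin_ext_add:
  assumes "\<And>k. F k 0 = 0" "\<And>k a b. F k (a + b) = F k a + F k b"
  shows "lin_ext F (p + q) = lin_ext F p + lin_ext F q"
  unfolding lin_ext_def lookup_add[symmetric]
  by (rule setsum_keys_plus_distrib) (use assms in auto)

lemma lin_ext_single [simp]:
  assumes "\<And>k. F k 0 = 0"
  shows "lin_ext F (Poly_Mapping.single k v) = F k v"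
  using assms by (simp add: lin_ext_def)

lemma lin_ext_zero [simp]: "lin_ext F 0 = 0"
  by (simp add: lin_ext_def)

lemma poly_mapping_sum_single:
  "(\<Sum>k\<in>Poly_Mapping.keys p. Poly_Mapping.single k (Poly_Mapping.lookup p k)) = p"
  by (rule poly_mapping_eqI) (simp add: lookup_sum lookup_single when_def in_keys_iff)

lemma additive_sum:
  assumes "\<And>x y. h (x + y) = h x + h y" "h 0 = 0"
  shows "h (sum g S) = (\<Sum>s\<in>S. h (g s))"
  using sum_comp_morphism[of h g S] assms by (simp add: comp_def)

lemma additive_poly_mapping_eqI:
  fixes p :: "'k \<Rightarrow>\<^sub>0 'b::comm_monoid_add" and h h' :: "_ \<Rightarrow> 'c::comm_monoid_add"
  assumes "\<And>x y. h (x + y) = h x + h y" "h 0 = 0"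
    and "\<And>x y. h' (x + y) = h' x + h' y" "h' 0 = 0"
    and "\<And>k v. h (Poly_Mapping.single k v) = h' (Poly_Mapping.single k v)"
  shows "h p = h' p"
proof -
  have "h p = (\<Sum>k\<in>Poly_Mapping.keys p. h (Poly_Mapping.single k (Poly_Mapping.lookup p k)))"
    by (subst poly_mapping_sum_single[symmetric]) (rule additive_sum[OF assms(1,2)])
  also have "\<dots> = h' p"
    by (subst (2) poly_mapping_sum_single[symmetric]) (simp add: additive_sum[OF assms(3,4)] assms(5))
  finally show ?thesis .
qed

definition total_degree :: "('k \<Rightarrow>\<^sub>0 nat) \<Rightarrow> nat" where
  "total_degree m = lin_ext (\<lambda>k n. n) m"

lemma total_degree_add: "total_degree (a + b) = total_degree a + total_degree b"
  unfolding total_degree_def by (rule lin_ext_add) auto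

lemma total_degree_single [simp]: "total_degree (Poly_Mapping.single k n) = n"
  unfolding total_degree_def by simp

lemma monomial_induct [case_names zero add_var]:
  fixes m :: "'k \<Rightarrow>\<^sub>0 nat"
  assumes "P 0" "\<And>m w. P m \<Longrightarrow> P (m + Poly_Mapping.single w 1)"
  shows "P m"
proof (induction "total_degree m" arbitrary: m rule: less_induct)
  case less
  show ?case
  proof (cases "m = 0")
    case False
    then obtain w where w: "w \<in> Poly_Mapping.keys m"
      by (metis keys_eq_empty ex_in_conv)
    let ?m' = "m - Poly_Mapping.single w 1"
    have m: "m = ?m' + Poly_Mapping.single w 1"
      using w by (intro poly_mapping_eqI)
        (auto simp: lookup_add lookup_minus lookup_single when_def in_keys_iff)
    have "total_degree m = total_degree ?m' + 1"
      by (subst m) (simp only: total_degree_add total_degree_single)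
    then have "P ?m'" by (intro less) simp
    then show ?thesis by (subst m) (rule assms(2))
  qed (use assms in simp)
qed

section \<open>The derivation of \<open>F{Y}\<close>\<close>

abbreviation dp_monom :: "(('v \<times> nat) \<Rightarrow>\<^sub>0 nat) \<Rightarrow> ('v, 'a::field) dpoly" where
  "dp_monom m \<equiv> Poly_Mapping.single m 1"

lemma dp_const_add: "dp_const (a + b) = dp_const a + dp_const b"
  by (simp add: dp_const_def single_add)

lemma dp_const_mult: "dp_const (a * b) = dp_const a * dp_const b"
  by (simp add: dp_const_def mult_single)

lemma dp_const_0 [simp]: "dp_const 0 = 0"
  by (simp add: dp_const_def)

lemma dp_const_1 [simp]: "dp_const 1 = 1"
  by (simp add: dp_const_def)

lemma dp_const_of_nat: "(of_nat n :: ('v, 'a::field) dpoly) = dp_const (of_nat n)"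
  by (simp add: dp_const_def)

lemma single_eq_dp_const_mult: "Poly_Mapping.single m c = dp_const c * dp_monom m"
  by (simp add: dp_const_def mult_single)

lemma lookup_dp_const_mult: "Poly_Mapping.lookup (dp_const c * f) m = c * Poly_Mapping.lookup f m"
  by (simp add: dp_const_def mult_map_scale_conv_mult[symmetric] Poly_Mapping.map.rep_eq when_def)

lemma keys_dp_const_mult: "Poly_Mapping.keys (dp_const c * f) \<subseteq> Poly_Mapping.keys f"
  by (auto simp: in_keys_iff lookup_dp_const_mult)

definition raise_order :: "'v \<times> nat \<Rightarrow> (('v \<times> nat) \<Rightarrow>\<^sub>0 nat) \<Rightarrow> (('v \<times> nat) \<Rightarrow>\<^sub>0 nat)" where
  "raise_order w m = m - Poly_Mapping.single w 1 + Poly_Mapping.single (fst w, Suc (snd w)) 1"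

lemma add_raise_order:
  assumes "Poly_Mapping.lookup m w \<noteq> 0"
  shows "c + raise_order w m = raise_order w (c + m)"
  unfolding raise_order_def using assms
  by (intro poly_mapping_eqI) (auto simp: lookup_add lookup_minus lookup_single when_def)

lemma dmono_deriv_superset:
  assumes "finite S" "Poly_Mapping.keys m \<subseteq> S"
  shows "(dmono_deriv m :: ('v, 'a::field) dpoly) =
    (\<Sum>w\<in>S. of_nat (Poly_Mapping.lookup m w) * dp_monom (raise_order w m))"
  unfolding dmono_deriv_def raise_order_def using assms
  by (intro sum.mono_neutral_left) (auto simp: in_keys_iff)

lemma dmono_deriv_0 [simp]: "dmono_deriv 0 = 0"
  by (simp add: dmono_deriv_def)

lemma dmono_deriv_var [simp]:
  "(dmono_deriv (Poly_Mapping.single w (Suc 0)) :: ('v, 'a::field) dpoly) =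
     dp_monom (Poly_Mapping.single (fst w, Suc (snd w)) 1)"
  by (simp add: dmono_deriv_def)

lemma dmono_deriv_add:
  "(dmono_deriv (a + b) :: ('v, 'a::field) dpoly) = dp_monom a * dmono_deriv b + dmono_deriv a * dp_monom b"
proof -
  let ?S = "Poly_Mapping.keys a \<union> Poly_Mapping.keys b"
  let ?T = "\<lambda>m w. dp_monom (raise_order w m) :: ('v, 'a) dpoly"
  have left: "dp_monom a * (of_nat (Poly_Mapping.lookup b w) * ?T b w) =
      of_nat (Poly_Mapping.lookup b w) * ?T (a + b) w" for w
  proof (cases "Poly_Mapping.lookup b w = 0")
    case False
    then show ?thesis
      by (simp only: mult.left_commute[of "dp_monom a"] mult_single mult_1 add_raise_order[OF False])
  qed simp
  have right: "of_nat (Poly_Mapping.lookup a w) * ?T a w * dp_monom b =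
      of_nat (Poly_Mapping.lookup a w) * ?T (a + b) w" for w
  proof (cases "Poly_Mapping.lookup a w = 0")
    case False
    then show ?thesis
      by (simp only: mult.assoc mult_single mult_1 add.commute[of _ b] add_raise_order[OF False])
  qed simp
  have "dmono_deriv (a + b) = (\<Sum>w\<in>?S. of_nat (Poly_Mapping.lookup (a + b) w) * ?T (a + b) w)"
    by (rule dmono_deriv_superset) (use keys_add[of a b] in auto)
  also have "\<dots> = (\<Sum>w\<in>?S. dp_monom a * (of_nat (Poly_Mapping.lookup b w) * ?T b w) +
      of_nat (Poly_Mapping.lookup a w) * ?T a w * dp_monom b)"
    by (simp add: left right lookup_add distrib_right add.commute)
  also have "\<dots> = dp_monom a * dmono_deriv b + dmono_deriv a * dp_monom b"
    by (simp only: sum.distrib sum_distrib_left sum_distrib_right dmono_deriv_superset[of ?S] finite_UnI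
        finite_keys Un_upper1 Un_upper2)
  finally show ?thesis .
qed

lemma dp_deriv_0 [simp]: "dp_deriv \<delta> 0 = 0"
  by (simp add: dp_deriv_def)

context
  fixes \<delta> :: "'a::field \<Rightarrow> 'a"
  assumes df: "differential_field \<delta>"
begin

lemma deriv_add: "\<delta> (a + b) = \<delta> a + \<delta> b"
  using df by (simp add: differential_field_def)

lemma deriv_mult: "\<delta> (a * b) = a * \<delta> b + \<delta> a * b"
  using df by (simp add: differential_field_def)

lemma deriv_1 [simp]: "\<delta> 1 = 0"
proof -
  have "\<delta> 1 + 0 = \<delta> 1 + \<delta> 1"
    using deriv_mult[of 1 1] by simp
  then show ?thesis by (metis add_left_imp_eq)
qed

lemma deriv_0 [simp]: "\<delta> 0 = 0"
proof -
  have "\<delta> 0 + 0 = \<delta> 0 + \<delta> 0"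
    using deriv_add[of 0 0] by simp
  then show ?thesis by (metis add_left_imp_eq)
qed

lemma deriv_of_nat [simp]: "\<delta> (of_nat n) = 0"
  by (induction n) (simp_all add: deriv_add)

lemma dp_deriv_eq_lin_ext:
  "dp_deriv \<delta> p = lin_ext (\<lambda>m c. Poly_Mapping.single m (\<delta> c) + dp_const c * dmono_deriv m) p"
  by (simp add: dp_deriv_def lin_ext_def)

lemma dp_deriv_add: "dp_deriv \<delta> (p + q) = dp_deriv \<delta> p + dp_deriv \<delta> q"
  unfolding dp_deriv_eq_lin_ext
  by (rule lin_ext_add) (auto simp: deriv_add single_add dp_const_add algebra_simps)

lemma dp_deriv_single:
  "dp_deriv \<delta> (Poly_Mapping.single m c) = Poly_Mapping.single m (\<delta> c) + dp_const c * dmono_deriv m"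
  unfolding dp_deriv_eq_lin_ext by (subst lin_ext_single) auto

lemma dp_deriv_sum: "dp_deriv \<delta> (sum g S) = (\<Sum>s\<in>S. dp_deriv \<delta> (g s))"
  by (rule additive_sum) (auto simp: dp_deriv_add)

lemma dp_deriv_dp_const: "dp_deriv \<delta> (dp_const c) = dp_const (\<delta> c)"
  unfolding dp_const_def dp_deriv_single by (simp add: dp_const_def)

lemma dp_deriv_1 [simp]: "dp_deriv \<delta> 1 = 0"
  using dp_deriv_dp_const[of 1] by simp

lemma dp_deriv_var: "dp_deriv \<delta> (dp_var v k) = dp_var v (Suc k)"
  by (simp add: dp_var_def dp_deriv_single)

lemma dp_deriv_mult: "dp_deriv \<delta> (p * q) = p * dp_deriv \<delta> q + dp_deriv \<delta> p * q"
proof -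
  have singles: "dp_deriv \<delta> (Poly_Mapping.single m c * Poly_Mapping.single m' c') =
      Poly_Mapping.single m c * dp_deriv \<delta> (Poly_Mapping.single m' c') +
      dp_deriv \<delta> (Poly_Mapping.single m c) * Poly_Mapping.single m' c'" for m m' c c'
  proof -
    have "dp_deriv \<delta> (Poly_Mapping.single m c * Poly_Mapping.single m' c') =
        dp_const (c * \<delta> c' + \<delta> c * c') * (dp_monom m * dp_monom m') +
        dp_const (c * c') * (dp_monom m * dmono_deriv m' + dmono_deriv m * dp_monom m')"
      by (simp only: mult_single dp_deriv_single dmono_deriv_add deriv_mult)
        (subst single_eq_dp_const_mult, simp add: mult_single)
    also have "\<dots> = (dp_const c * dp_monom m) * (dp_const (\<delta> c') * dp_monom m' + dp_const c' * dmono_deriv m') +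
        (dp_const (\<delta> c) * dp_monom m + dp_const c * dmono_deriv m) * (dp_const c' * dp_monom m')"
      by (simp only: dp_const_add dp_const_mult algebra_simps)
    also have "\<dots> = Poly_Mapping.single m c * dp_deriv \<delta> (Poly_Mapping.single m' c') +
        dp_deriv \<delta> (Poly_Mapping.single m c) * Poly_Mapping.single m' c'"
      by (simp only: dp_deriv_single single_eq_dp_const_mult[symmetric])
    finally show ?thesis .
  qed
  have single_left: "dp_deriv \<delta> (Poly_Mapping.single m c * q) =
      Poly_Mapping.single m c * dp_deriv \<delta> q + dp_deriv \<delta> (Poly_Mapping.single m c) * q" for m c
    by (rule additive_poly_mapping_eqI[where h="\<lambda>q. dp_deriv \<delta> (Poly_Mapping.single m c * q)"])
      (auto simp: dp_deriv_add algebra_simps singles)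
  show ?thesis
    by (rule additive_poly_mapping_eqI[where h="\<lambda>p. dp_deriv \<delta> (p * q)"])
      (auto simp: dp_deriv_add ring_distribs single_left add_ac)
qed

lemma dp_deriv_of_nat [simp]: "dp_deriv \<delta> (of_nat n) = 0"
  by (simp add: dp_const_of_nat dp_deriv_dp_const)

end

section \<open>Substitution homomorphisms\<close>

definition eval_mono :: "('v \<times> nat \<Rightarrow> ('w, 'a::field) dpoly) \<Rightarrow> (('v \<times> nat) \<Rightarrow>\<^sub>0 nat) \<Rightarrow> ('w, 'a) dpoly" where
  "eval_mono \<sigma> m = (\<Prod>w\<in>Poly_Mapping.keys m. \<sigma> w ^ Poly_Mapping.lookup m w)"

lemma eval_mono_superset:
  assumes "finite S" "Poly_Mapping.keys m \<subseteq> S"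
  shows "eval_mono \<sigma> m = (\<Prod>w\<in>S. \<sigma> w ^ Poly_Mapping.lookup m w)"
  unfolding eval_mono_def using assms by (intro prod.mono_neutral_left) (auto simp: in_keys_iff)

lemma eval_mono_add: "eval_mono \<sigma> (a + b) = eval_mono \<sigma> a * eval_mono \<sigma> b"
proof -
  let ?S = "Poly_Mapping.keys a \<union> Poly_Mapping.keys b"
  have "eval_mono \<sigma> (a + b) = (\<Prod>w\<in>?S. \<sigma> w ^ Poly_Mapping.lookup (a + b) w)"
    by (rule eval_mono_superset) (use keys_add[of a b] in auto)
  also have "\<dots> = (\<Prod>w\<in>?S. \<sigma> w ^ Poly_Mapping.lookup a w) * (\<Prod>w\<in>?S. \<sigma> w ^ Poly_Mapping.lookup b w)"
    by (simp add: lookup_add power_add prod.distrib)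
  also have "\<dots> = eval_mono \<sigma> a * eval_mono \<sigma> b"
    by (subst (1 2) eval_mono_superset) auto
  finally show ?thesis .
qed

lemma eval_mono_0 [simp]: "eval_mono \<sigma> 0 = 1"
  by (simp add: eval_mono_def)

lemma eval_mono_var [simp]: "eval_mono \<sigma> (Poly_Mapping.single w (Suc 0)) = \<sigma> w"
  by (simp add: eval_mono_def)

lemma dp_subst_eq_lin_ext: "dp_subst \<sigma> p = lin_ext (\<lambda>m c. dp_const c * eval_mono \<sigma> m) p"
  by (simp add: dp_subst_def lin_ext_def eval_mono_def)

lemma dp_subst_add: "dp_subst \<sigma> (p + q) = dp_subst \<sigma> p + dp_subst \<sigma> q"
  unfolding dp_subst_eq_lin_ext by (rule lin_ext_add) (auto simp: dp_const_add algebra_simps)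

lemma dp_subst_0 [simp]: "dp_subst \<sigma> 0 = 0"
  by (simp add: dp_subst_def)

lemma dp_subst_single: "dp_subst \<sigma> (Poly_Mapping.single m c) = dp_const c * eval_mono \<sigma> m"
  unfolding dp_subst_eq_lin_ext by (subst lin_ext_single) auto

lemma dp_subst_mult: "dp_subst \<sigma> (p * q) = dp_subst \<sigma> p * dp_subst \<sigma> q"
proof -
  have single_left: "dp_subst \<sigma> (Poly_Mapping.single m c * q) =
      dp_subst \<sigma> (Poly_Mapping.single m c) * dp_subst \<sigma> q" for m c
    by (rule additive_poly_mapping_eqI[where h="\<lambda>q. dp_subst \<sigma> (Poly_Mapping.single m c * q)"])
      (auto simp: dp_subst_add ring_distribs mult_single dp_subst_single eval_mono_add dp_const_mult
        algebra_simps)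
  show ?thesis
    by (rule additive_poly_mapping_eqI[where h="\<lambda>p. dp_subst \<sigma> (p * q)"])
      (auto simp: dp_subst_add ring_distribs single_left)
qed

lemma dp_subst_dp_const [simp]: "dp_subst \<sigma> (dp_const c) = dp_const c"
  unfolding dp_const_def dp_subst_single by (simp add: dp_const_def)

lemma dp_subst_dp_monom: "dp_subst \<sigma> (dp_monom m) = eval_mono \<sigma> m"
  by (simp add: dp_subst_single)

lemma dp_deriv_dp_subst:
  assumes df: "differential_field \<delta>"
    and \<sigma>: "\<And>v k. dp_deriv \<delta> (\<sigma> (v, k)) = \<sigma> (v, Suc k)"
  shows "dp_deriv \<delta> (dp_subst \<sigma> p) = dp_subst \<sigma> (dp_deriv \<delta> p)"
proof -
  have mono: "dp_deriv \<delta> (eval_mono \<sigma> m) = dp_subst \<sigma> (dmono_deriv m)" for m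
  proof (induction m rule: monomial_induct)
    case zero
    then show ?case by (simp add: dp_deriv_1[OF df])
  next
    case (add_var m w)
    then show ?case
      by (simp add: eval_mono_add dp_deriv_mult[OF df] dmono_deriv_add dp_subst_add dp_subst_mult
          dp_subst_dp_monom \<sigma>[of "fst w" "snd w", simplified])
  qed
  have singles: "dp_deriv \<delta> (dp_subst \<sigma> (Poly_Mapping.single m c)) =
      dp_subst \<sigma> (dp_deriv \<delta> (Poly_Mapping.single m c))" for m c
    by (simp add: dp_subst_single dp_deriv_mult[OF df] dp_deriv_dp_const[OF df] dp_deriv_single[OF df]
        dp_subst_add dp_subst_mult mono)
  show ?thesis
    by (rule additive_poly_mapping_eqI[where h="\<lambda>p. dp_deriv \<delta> (dp_subst \<sigma> p)"])
      (auto simp: dp_subst_add dp_deriv_add[OF df] singles)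
qed

section \<open>Coefficients with respect to the indeterminate \<open>t\<close>\<close>

definition embed_mono :: "(('v \<times> nat) \<Rightarrow>\<^sub>0 nat) \<Rightarrow> (('v option \<times> nat) \<Rightarrow>\<^sub>0 nat)" where
  "embed_mono m = lin_ext (\<lambda>w n. Poly_Mapping.single (Some (fst w), snd w) n) m"

lemma embed_mono_add: "embed_mono (a + b) = embed_mono a + embed_mono b"
  unfolding embed_mono_def by (rule lin_ext_add) (auto simp: single_add)

lemma embed_mono_0 [simp]: "embed_mono 0 = 0"
  by (simp add: embed_mono_def)

lemma embed_mono_single [simp]:
  "embed_mono (Poly_Mapping.single w n) = Poly_Mapping.single (Some (fst w), snd w) n"
  by (simp add: embed_mono_def)

lemma eval_mono_embed: "eval_mono (\<lambda>(j, k). dp_var (Some j) k) m = (dp_monom (embed_mono m) :: (_, 'a::field) dpoly)"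
proof (induction m rule: monomial_induct)
  case (add_var m w)
  then show ?case
    by (simp add: eval_mono_add embed_mono_add mult_single dp_var_def split: prod.splits)
qed simp

lemma embed_tY_single: "embed_tY (Poly_Mapping.single m c) = Poly_Mapping.single (embed_mono m) c"
  by (simp add: embed_tY_def dp_subst_single eval_mono_embed single_eq_dp_const_mult[symmetric])

lemma embed_tY_add: "embed_tY (p + q) = embed_tY p + embed_tY q"
  by (simp add: embed_tY_def dp_subst_add)

lemma embed_tY_0 [simp]: "embed_tY 0 = 0"
  by (simp add: embed_tY_def)

lemma dp_deriv_embed_tY:
  assumes "differential_field \<delta>"
  shows "dp_deriv \<delta> (embed_tY g) = embed_tY (dp_deriv \<delta> g)"
  unfolding embed_tY_def by (rule dp_deriv_dp_subst) (simp_all add: assms dp_deriv_var)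

text \<open>\<open>F{t,Y}\<close> is viewed as a polynomial ring in the derivatives of \<open>t\<close> over \<open>F{Y}\<close>.\<close>

definition t_part :: "(('v option \<times> nat) \<Rightarrow>\<^sub>0 nat) \<Rightarrow> (('v option \<times> nat) \<Rightarrow>\<^sub>0 nat)" where
  "t_part m = lin_ext (\<lambda>w n. if fst w = None then Poly_Mapping.single w n else 0) m"

definition y_part :: "(('v option \<times> nat) \<Rightarrow>\<^sub>0 nat) \<Rightarrow> (('v \<times> nat) \<Rightarrow>\<^sub>0 nat)" where
  "y_part m = lin_ext (\<lambda>w n. case fst w of None \<Rightarrow> 0 | Some j \<Rightarrow> Poly_Mapping.single (j, snd w) n) m"

definition t_coeff :: "(('v option \<times> nat) \<Rightarrow>\<^sub>0 nat) \<Rightarrow> ('v option, 'a::field) dpoly \<Rightarrow> ('v, 'a) dpoly" where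
  "t_coeff T f = lin_ext (\<lambda>m c. if t_part m = T then Poly_Mapping.single (y_part m) c else 0) f"

lemma t_part_add: "t_part (a + b) = t_part a + t_part b"
  unfolding t_part_def by (rule lin_ext_add) (auto simp: single_add)

lemma y_part_add: "y_part (a + b) = y_part a + y_part b"
  unfolding y_part_def by (rule lin_ext_add) (auto simp: single_add split: option.splits)

lemma t_part_single:
  "t_part (Poly_Mapping.single w n) = (if fst w = None then Poly_Mapping.single w n else 0)"
  by (simp add: t_part_def)

lemma y_part_single: "y_part (Poly_Mapping.single w n) =
    (case fst w of None \<Rightarrow> 0 | Some j \<Rightarrow> Poly_Mapping.single (j, snd w) n)"
  by (simp add: y_part_def split: option.splits)

lemma t_part_0 [simp]: "t_part 0 = 0"
  by (simp add: t_part_def)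

lemma y_part_0 [simp]: "y_part 0 = 0"
  by (simp add: y_part_def)

lemma t_part_embed_mono [simp]: "t_part (embed_mono m) = 0"
  by (rule additive_poly_mapping_eqI[where h="\<lambda>m. t_part (embed_mono m)"])
    (auto simp: t_part_add embed_mono_add t_part_single)

lemma y_part_embed_mono [simp]: "y_part (embed_mono m) = m"
  by (rule additive_poly_mapping_eqI[where h="\<lambda>m. y_part (embed_mono m)"])
    (auto simp: y_part_add embed_mono_add y_part_single)

lemma t_coeff_add: "t_coeff T (p + q) = t_coeff T p + t_coeff T q"
  unfolding t_coeff_def by (rule lin_ext_add) (auto simp: single_add)

lemma t_coeff_0 [simp]: "t_coeff T 0 = 0"
  by (simp add: t_coeff_def)

lemma t_coeff_single:
  "t_coeff T (Poly_Mapping.single m c) = (if t_part m = T then Poly_Mapping.single (y_part m) c else 0)"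
  by (simp add: t_coeff_def)

lemma t_coeff_sum: "t_coeff T (sum g S) = (\<Sum>s\<in>S. t_coeff T (g s))"
  by (rule additive_sum) (auto simp: t_coeff_add)

lemma t_coeff_eq_0:
  assumes "\<forall>m\<in>Poly_Mapping.keys f. t_part m \<noteq> T"
  shows "t_coeff T f = 0"
  unfolding t_coeff_def lin_ext_def using assms by (intro sum.neutral) auto

lemma t_coeff_mult_embed_tY: "t_coeff T (r * embed_tY g) = t_coeff T r * g"
proof -
  have single_left: "t_coeff T (Poly_Mapping.single m c * embed_tY g) = t_coeff T (Poly_Mapping.single m c) * g"
    for m c
    by (rule additive_poly_mapping_eqI[where h="\<lambda>g. t_coeff T (Poly_Mapping.single m c * embed_tY g)"])
      (auto simp: t_coeff_add embed_tY_add ring_distribs embed_tY_single mult_single t_coeff_single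
        t_part_add y_part_add)
  show ?thesis
    by (rule additive_poly_mapping_eqI[where h="\<lambda>r. t_coeff T (r * embed_tY g)"])
      (auto simp: t_coeff_add ring_distribs single_left)
qed

section \<open>The ideal generated by \<open>I\<close> in \<open>F{t,Y}\<close>\<close>

inductive_set extended_ideal :: "('v, 'a::field) dpoly set \<Rightarrow> ('v option, 'a) dpoly set" for I where
  zero: "0 \<in> extended_ideal I"
| combine: "g \<in> I \<Longrightarrow> f \<in> extended_ideal I \<Longrightarrow> r * embed_tY g + f \<in> extended_ideal I"

lemma extended_ideal_add:
  "f \<in> extended_ideal I \<Longrightarrow> f' \<in> extended_ideal I \<Longrightarrow> f + f' \<in> extended_ideal I"
  by (induction f rule: extended_ideal.induct) (auto simp: add.assoc intro: extended_ideal.intros)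

lemma extended_ideal_mult:
  "f \<in> extended_ideal I \<Longrightarrow> s * f \<in> extended_ideal I"
proof (induction f rule: extended_ideal.induct)
  case (combine g f r)
  have "s * (r * embed_tY g + f) = (s * r) * embed_tY g + s * f"
    by (simp add: algebra_simps)
  then show ?case using combine by (simp add: extended_ideal.combine)
qed (simp add: extended_ideal.zero)

lemma embed_tY_mem_extended_ideal: "g \<in> I \<Longrightarrow> embed_tY g \<in> extended_ideal I"
  using extended_ideal.combine[OF _ extended_ideal.zero, of g I 1] by simp

lemma dp_deriv_mem_extended_ideal:
  assumes df: "differential_field \<delta>" and I: "\<forall>g\<in>I. dp_deriv \<delta> g \<in> I"
  shows "f \<in> extended_ideal I \<Longrightarrow> dp_deriv \<delta> f \<in> extended_ideal I"
proof (induction f rule: extended_ideal.induct)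
  case (combine g f r)
  have "dp_deriv \<delta> (r * embed_tY g + f) =
      r * embed_tY (dp_deriv \<delta> g) + (dp_deriv \<delta> r * embed_tY g + dp_deriv \<delta> f)"
    by (simp add: dp_deriv_add[OF df] dp_deriv_mult[OF df] dp_deriv_embed_tY[OF df] algebra_simps)
  then show ?case using combine I by (simp add: extended_ideal.combine)
qed (simp add: extended_ideal.zero)

lemma diff_ideal_gen_embed_tY_subset:
  assumes "differential_field \<delta>" "is_diff_ideal \<delta> I"
  shows "diff_ideal_gen \<delta> (embed_tY ` I) \<subseteq> extended_ideal I"
proof -
  have "is_diff_ideal \<delta> (extended_ideal I)"
    using assms unfolding is_diff_ideal_def is_ideal_def
    by (auto intro: extended_ideal.zero extended_ideal_add extended_ideal_mult dp_deriv_mem_extended_ideal)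
  moreover have "embed_tY ` I \<subseteq> extended_ideal I"
    by (auto intro: embed_tY_mem_extended_ideal)
  ultimately show ?thesis
    unfolding diff_ideal_gen_def by blast
qed

lemma t_coeff_mem_ideal:
  assumes "is_ideal I"
  shows "f \<in> extended_ideal I \<Longrightarrow> t_coeff T f \<in> I"
proof (induction f rule: extended_ideal.induct)
  case (combine g f r)
  then have "t_coeff T r * g \<in> I"
    using assms unfolding is_ideal_def by blast
  then show ?case
    using combine assms unfolding is_ideal_def by (simp add: t_coeff_add t_coeff_mult_embed_tY)
qed (use assms in \<open>simp add: is_ideal_def\<close>)

section \<open>Leading terms of \<open>P(tY)\<close>\<close>

lemma pascal_sum_step:
  fixes a :: "nat \<Rightarrow> nat \<Rightarrow> 'r::comm_ring_1"
  shows "(\<Sum>l\<le>k. of_nat (k choose l) * (a (Suc l) (k - l) + a l (Suc k - l))) =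
         (\<Sum>l\<le>Suc k. of_nat (Suc k choose l) * a l (Suc k - l))"
proof -
  have "(\<Sum>l\<le>Suc k. of_nat (Suc k choose l) * a l (Suc k - l)) =
      a 0 (Suc k) + (\<Sum>l\<le>k. of_nat (k choose l) * a (Suc l) (k - l)) +
      (\<Sum>l\<le>k. of_nat (k choose Suc l) * a (Suc l) (k - l))"
    by (subst sum.atMost_Suc_shift) (simp add: sum.distrib algebra_simps)
  moreover have "(\<Sum>l\<le>k. of_nat (k choose l) * a l (Suc k - l)) =
      (\<Sum>l\<le>Suc k. of_nat (k choose l) * a l (Suc k - l))"
    by (simp add: binomial_eq_0)
  moreover have "\<dots> = a 0 (Suc k) + (\<Sum>l\<le>k. of_nat (k choose Suc l) * a (Suc l) (k - l))"
    by (subst sum.atMost_Suc_shift) simp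
  ultimately show ?thesis
    by (simp add: sum.distrib algebra_simps)
qed

lemma dp_deriv_iter_mult_vars:
  assumes df: "differential_field \<delta>"
  shows "(dp_deriv \<delta> ^^ k) (dp_var u 0 * dp_var v 0 :: ('w, 'a::field) dpoly) =
    (\<Sum>l\<le>k. of_nat (k choose l) * (dp_var u l * dp_var v (k - l)))"
proof (induction k)
  case (Suc k)
  have "(dp_deriv \<delta> ^^ Suc k) (dp_var u 0 * dp_var v 0 :: ('w, 'a) dpoly) =
      (\<Sum>l\<le>k. of_nat (k choose l) * (dp_var u (Suc l) * dp_var v (k - l) + dp_var u l * dp_var v (Suc k - l)))"
    by (simp only: funpow.simps comp_apply Suc)
      (simp add: dp_deriv_sum[OF df] dp_deriv_of_nat[OF df] dp_deriv_mult[OF df] dp_deriv_var[OF df]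
        Suc_diff_le algebra_simps)
  also have "\<dots> = (\<Sum>l\<le>Suc k. of_nat (Suc k choose l) * (dp_var u l * dp_var v (Suc k - l)))"
    by (rule pascal_sum_step[where a="\<lambda>l r. dp_var u l * dp_var v r"])
  finally show ?case .
qed simp

definition weight :: "(('v \<times> nat) \<Rightarrow>\<^sub>0 nat) \<Rightarrow> nat" where
  "weight m = lin_ext (\<lambda>w n. snd w * n) m"

lemma weight_add: "weight (a + b) = weight a + weight b"
  unfolding weight_def by (rule lin_ext_add) (auto simp: algebra_simps)

definition t_degree :: "(('v option \<times> nat) \<Rightarrow>\<^sub>0 nat) \<Rightarrow> nat" where
  "t_degree m = total_degree (t_part m)"

definition t_weight :: "(('v option \<times> nat) \<Rightarrow>\<^sub>0 nat) \<Rightarrow> nat" where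
  "t_weight m = weight (t_part m)"

definition y_weight :: "(('v option \<times> nat) \<Rightarrow>\<^sub>0 nat) \<Rightarrow> nat" where
  "y_weight m = weight (y_part m)"

lemma t_degree_add: "t_degree (a + b) = t_degree a + t_degree b"
  by (simp add: t_degree_def t_part_add total_degree_add)

lemma t_weight_add: "t_weight (a + b) = t_weight a + t_weight b"
  by (simp add: t_weight_def t_part_add weight_add)

lemma y_weight_add: "y_weight (a + b) = y_weight a + y_weight b"
  by (simp add: y_weight_def y_part_add weight_add)

text \<open>Differentiation moves weight between \<open>t\<close> and \<open>Y\<close> without changing the total; \<open>f\<close> has the
  leading term \<open>a\<close> if all other terms carry strictly less weight in \<open>t\<close>.\<close>

definition lower_term :: "nat \<Rightarrow> nat \<Rightarrow> (('v option \<times> nat) \<Rightarrow>\<^sub>0 nat) \<Rightarrow> bool" where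
  "lower_term d W m \<longleftrightarrow> t_degree m = d \<and> t_weight m + y_weight m = W \<and> t_weight m < W"

definition t_leading :: "nat \<Rightarrow> nat \<Rightarrow> (('v option \<times> nat) \<Rightarrow>\<^sub>0 nat) \<Rightarrow> ('v option, 'a::field) dpoly \<Rightarrow> bool" where
  "t_leading d W a f \<longleftrightarrow> t_degree a = d \<and> t_weight a = W \<and> y_weight a = 0 \<and>
     (\<exists>R. f = dp_monom a + R \<and> (\<forall>m\<in>Poly_Mapping.keys R. lower_term d W m))"

lemma t_leading_1: "t_leading 0 0 0 1"
  unfolding t_leading_def
  by (intro conjI exI[of _ 0]) (auto simp: t_degree_def t_weight_def y_weight_def total_degree_def weight_def)

lemma lower_term_add:
  assumes "lower_term d W x" "t_degree y = d'" "t_weight y + y_weight y = W'" "t_weight y \<le> W'"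
  shows "lower_term (d + d') (W + W') (x + y)" "lower_term (d' + d) (W' + W) (y + x)"
  using assms unfolding lower_term_def by (auto simp: t_degree_add t_weight_add y_weight_add)

lemma t_leading_mult:
  assumes "t_leading d W a f" "t_leading d' W' a' f'"
  shows "t_leading (d + d') (W + W') (a + a') (f * f')"
proof -
  obtain R where f: "f = dp_monom a + R" and R: "\<And>x. x \<in> Poly_Mapping.keys R \<Longrightarrow> lower_term d W x"
    and a: "t_degree a = d" "t_weight a = W" "y_weight a = 0"
    using assms(1) unfolding t_leading_def by blast
  obtain R' where f': "f' = dp_monom a' + R'" and R': "\<And>y. y \<in> Poly_Mapping.keys R' \<Longrightarrow> lower_term d' W' y"
    and a': "t_degree a' = d'" "t_weight a' = W'" "y_weight a' = 0"
    using assms(2) unfolding t_leading_def by blast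
  define R2 where "R2 = dp_monom a * R' + R * dp_monom a' + R * R'"
  have "f * f' = dp_monom (a + a') + R2"
    by (simp add: f f' R2_def algebra_simps mult_single)
  moreover have "lower_term (d + d') (W + W') m" if m: "m \<in> Poly_Mapping.keys R2" for m
  proof -
    have "m \<in> {a + y |y. y \<in> Poly_Mapping.keys R'} \<union> {x + a' |x. x \<in> Poly_Mapping.keys R} \<union>
        {x + y |x y. x \<in> Poly_Mapping.keys R \<and> y \<in> Poly_Mapping.keys R'}"
      using m keys_add[of "dp_monom a * R' + R * dp_monom a'" "R * R'"]
        keys_add[of "dp_monom a * R'" "R * dp_monom a'"] keys_mult[of "dp_monom a" R', simplified]
        keys_mult[of R "dp_monom a'", simplified] keys_mult[of R R']
      unfolding R2_def by blast
    then consider (left) y where "m = a + y" "y \<in> Poly_Mapping.keys R'"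
      | (right) x where "m = x + a'" "x \<in> Poly_Mapping.keys R"
      | (both) x y where "m = x + y" "x \<in> Poly_Mapping.keys R" "y \<in> Poly_Mapping.keys R'"
      by blast
    then show ?thesis
    proof cases
      case left
      then show ?thesis
        using lower_term_add(2)[OF R'[OF left(2)]] a by simp
    next
      case right
      then show ?thesis
        using lower_term_add(1)[OF R[OF right(2)]] a' by simp
    next
      case both
      then show ?thesis
        using lower_term_add(1)[OF R[OF both(2)]] R'[OF both(3)] unfolding lower_term_def by simp
    qed
  qed
  ultimately show ?thesis
    unfolding t_leading_def using a a' by (auto simp: t_degree_add t_weight_add y_weight_add)
qed

lemma t_leading_power:
  assumes "t_leading 1 k (Poly_Mapping.single t 1 + Poly_Mapping.single y 1) f"
  shows "t_leading n (n * k) (Poly_Mapping.single t n + Poly_Mapping.single y n) (f ^ n)"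
proof (induction n)
  case (Suc n)
  have "Poly_Mapping.single t n + Poly_Mapping.single y n + (Poly_Mapping.single t 1 + Poly_Mapping.single y 1) =
      Poly_Mapping.single t (Suc n) + Poly_Mapping.single y (Suc n)"
    by (rule poly_mapping_eqI) (simp add: lookup_add lookup_single when_def)
  with t_leading_mult[OF Suc assms] show ?case
    by (simp add: mult.commute add.commute)
qed (simp add: t_leading_1)

lemma t_leading_prod:
  assumes "finite S" "\<forall>s\<in>S. t_leading (d s) (W s) (a s) (f s)"
  shows "t_leading (\<Sum>s\<in>S. d s) (\<Sum>s\<in>S. W s) (\<Sum>s\<in>S. a s) (\<Prod>s\<in>S. f s)"
  using assms by (induction S rule: finite_induct) (simp_all add: t_leading_1 t_leading_mult)

lemma weight_single [simp]: "weight (Poly_Mapping.single w n) = snd w * n"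
  by (simp add: weight_def)

lemma t_y_mono_degree:
  "t_degree (Poly_Mapping.single (None, l) 1 + Poly_Mapping.single (Some i, r) 1) = 1"
  "t_weight (Poly_Mapping.single (None, l) 1 + Poly_Mapping.single (Some i, r) 1) = l"
  "y_weight (Poly_Mapping.single (None, l) 1 + Poly_Mapping.single (Some i, r) 1) = r"
  by (simp_all add: t_degree_def t_weight_def y_weight_def t_part_add y_part_add t_part_single
      y_part_single total_degree_add weight_add)

lemma t_leading_scale_var:
  assumes df: "differential_field \<delta>"
  shows "t_leading 1 k (Poly_Mapping.single (None, k) 1 + Poly_Mapping.single (Some i, 0) 1)
     ((dp_deriv \<delta> ^^ k) (dp_var None 0 * dp_var (Some i) 0) :: ('v option, 'a::field) dpoly)"
proof -
  define B where "B l = Poly_Mapping.single (None, l) 1 + Poly_Mapping.single (Some i, k - l) (1::nat)" for l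
  have terms: "of_nat c * (dp_var None l * dp_var (Some i) (k - l)) =
      Poly_Mapping.single (B l) (of_nat c :: 'a)" for c l
    by (simp only: dp_var_def mult_single B_def single_of_nat[symmetric] add_0 mult_1_right)
  define R where "R = (\<Sum>l<k. Poly_Mapping.single (B l) (of_nat (k choose l) :: 'a))"
  have "(dp_deriv \<delta> ^^ k) (dp_var None 0 * dp_var (Some i) 0) =
      (\<Sum>l<Suc k. Poly_Mapping.single (B l) (of_nat (k choose l) :: 'a))"
    by (simp only: dp_deriv_iter_mult_vars[OF df] terms lessThan_Suc_atMost)
  also have "\<dots> = dp_monom (B k) + R"
    by (simp only: sum.lessThan_Suc binomial_n_n of_nat_1 add.commute R_def)
  finally have expand: "(dp_deriv \<delta> ^^ k) (dp_var None 0 * dp_var (Some i) 0) = dp_monom (B k) + R" .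
  have "lower_term 1 k m" if m: "m \<in> Poly_Mapping.keys R" for m
  proof -
    obtain l where "l < k" "m \<in> Poly_Mapping.keys (Poly_Mapping.single (B l) (of_nat (k choose l) :: 'a))"
      using m keys_sum[of "\<lambda>l. Poly_Mapping.single (B l) (of_nat (k choose l) :: 'a)" "{..<k}"]
      unfolding R_def by blast
    then have "l < k" "m = B l"
      by (simp_all split: if_splits)
    then show ?thesis
      unfolding lower_term_def B_def by (simp only: t_y_mono_degree) simp
  qed
  with expand show ?thesis
    unfolding t_leading_def B_def by (simp only: t_y_mono_degree diff_self_eq_0) blast
qed

definition scale_subst :: "('a::field \<Rightarrow> 'a) \<Rightarrow> 'v \<times> nat \<Rightarrow> ('v option, 'a) dpoly" where
  "scale_subst \<delta> = (\<lambda>(j, k). (dp_deriv \<delta> ^^ k) (dp_var None 0 * dp_var (Some j) 0))"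

lemma scale_tY_eq_dp_subst: "scale_tY \<delta> = dp_subst (scale_subst \<delta>)"
  by (simp add: scale_tY_def scale_subst_def)

text \<open>The leading monomial of \<open>m(tY)\<close> for a monomial \<open>m\<close> in the derivatives of \<open>y\<^sub>i\<close>:
  each factor \<open>y\<^sub>i\<^sup>(\<^sup>k\<^sup>)\<close> of \<open>m\<close> contributes \<open>t\<^sup>(\<^sup>k\<^sup>) y\<^sub>i\<close>.\<close>

definition t_lead_mono :: "'v \<Rightarrow> (('v \<times> nat) \<Rightarrow>\<^sub>0 nat) \<Rightarrow> (('v option \<times> nat) \<Rightarrow>\<^sub>0 nat)" where
  "t_lead_mono i m = (\<Sum>w\<in>Poly_Mapping.keys m.
      Poly_Mapping.single (None, snd w) (Poly_Mapping.lookup m w) +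
      Poly_Mapping.single (Some i, 0) (Poly_Mapping.lookup m w))"

lemma t_leading_eval_scale_mono:
  assumes df: "differential_field \<delta>" and m: "\<forall>w\<in>Poly_Mapping.keys m. fst w = i"
  shows "t_leading (total_degree m) (weight m) (t_lead_mono i m)
    (eval_mono (scale_subst \<delta>) m :: ('v option, 'a::field) dpoly)"
proof -
  have "t_leading (Poly_Mapping.lookup m w) (Poly_Mapping.lookup m w * snd w)
      (Poly_Mapping.single (None, snd w) (Poly_Mapping.lookup m w) +
       Poly_Mapping.single (Some i, 0) (Poly_Mapping.lookup m w))
      (scale_subst \<delta> w ^ Poly_Mapping.lookup m w :: ('v option, 'a) dpoly)"
    if "w \<in> Poly_Mapping.keys m" for w
  proof -
    have "w = (i, snd w)"
      using m that by (metis prod.collapse)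
    then have "scale_subst \<delta> w = (dp_deriv \<delta> ^^ snd w) (dp_var None 0 * dp_var (Some i) 0)"
      unfolding scale_subst_def by (metis case_prod_conv)
    then show ?thesis
      using t_leading_power[OF t_leading_scale_var[OF df, of "snd w" i]] by simp
  qed
  then have "t_leading (\<Sum>w\<in>Poly_Mapping.keys m. Poly_Mapping.lookup m w)
      (\<Sum>w\<in>Poly_Mapping.keys m. Poly_Mapping.lookup m w * snd w) (t_lead_mono i m)
      (\<Prod>w\<in>Poly_Mapping.keys m. scale_subst \<delta> w ^ Poly_Mapping.lookup m w :: ('v option, 'a) dpoly)"
    unfolding t_lead_mono_def by (intro t_leading_prod) simp_all
  then show ?thesis
    by (simp add: total_degree_def weight_def lin_ext_def eval_mono_def mult.commute)
qed

lemma lookup_t_part_t_lead_mono: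
  assumes m: "\<forall>w\<in>Poly_Mapping.keys m. fst w = i"
  shows "Poly_Mapping.lookup (t_part (t_lead_mono i m)) (None, k) = Poly_Mapping.lookup m (i, k)"
proof -
  have "t_part (t_lead_mono i m) =
      (\<Sum>w\<in>Poly_Mapping.keys m. Poly_Mapping.single (None, snd w) (Poly_Mapping.lookup m w))"
    unfolding t_lead_mono_def by (subst additive_sum[where h=t_part]) (auto simp: t_part_add t_part_single)
  then have "Poly_Mapping.lookup (t_part (t_lead_mono i m)) (None, k) =
      (\<Sum>w\<in>Poly_Mapping.keys m. if snd w = k then Poly_Mapping.lookup m w else 0)"
    by (auto simp: lookup_sum lookup_single when_def intro!: sum.cong)
  also have "\<dots> = (\<Sum>w\<in>Poly_Mapping.keys m. if w = (i, k) then Poly_Mapping.lookup m w else 0)"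
    using m by (intro sum.cong refl) (auto simp: prod_eq_iff)
  also have "\<dots> = Poly_Mapping.lookup m (i, k)"
    by (simp add: in_keys_iff)
  finally show ?thesis .
qed

lemma y_part_t_lead_mono: "y_part (t_lead_mono i m) = Poly_Mapping.single (i, 0) (total_degree m)"
proof -
  have "y_part (t_lead_mono i m) =
      (\<Sum>w\<in>Poly_Mapping.keys m. Poly_Mapping.single (i, 0) (Poly_Mapping.lookup m w))"
    unfolding t_lead_mono_def by (subst additive_sum[where h=y_part]) (auto simp: y_part_add y_part_single)
  also have "\<dots> = Poly_Mapping.single (i, 0) (\<Sum>w\<in>Poly_Mapping.keys m. Poly_Mapping.lookup m w)"
    by (rule additive_sum[symmetric]) (auto simp: single_add)
  finally show ?thesis
    by (simp add: total_degree_def lin_ext_def)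
qed

lemma t_part_t_lead_mono_inj:
  fixes m m' :: "('v \<times> nat) \<Rightarrow>\<^sub>0 nat"
  assumes "\<forall>w\<in>Poly_Mapping.keys m. fst w = i" "\<forall>w\<in>Poly_Mapping.keys m'. fst w = i"
    and "t_part (t_lead_mono i m) = t_part (t_lead_mono i m')"
  shows "m = m'"
proof (rule poly_mapping_eqI)
  fix x :: "'v \<times> nat"
  obtain j k where x: "x = (j, k)"
    by (cases x)
  show "Poly_Mapping.lookup m x = Poly_Mapping.lookup m' x"
  proof (cases "j = i")
    case True
    then show ?thesis
      using lookup_t_part_t_lead_mono[OF assms(1), of k] lookup_t_part_t_lead_mono[OF assms(2), of k] assms(3) x
      by simp
  next
    case False
    then show ?thesis
      using assms(1,2) x by (metis fst_conv in_keys_iff)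
  qed
qed

lemma t_coeff_scale_mono:
  assumes df: "differential_field \<delta>"
    and m: "\<forall>w\<in>Poly_Mapping.keys m. fst w = i" and ms: "\<forall>w\<in>Poly_Mapping.keys ms. fst w = i"
    and max: "total_degree m = total_degree ms \<Longrightarrow> weight m \<le> weight ms"
  shows "t_coeff (t_part (t_lead_mono i ms)) (dp_const c * eval_mono (scale_subst \<delta>) m :: ('v option, 'a::field) dpoly) =
    (if m = ms then Poly_Mapping.single (Poly_Mapping.single (i, 0) (total_degree ms)) c else 0)"
proof -
  define T where "T = t_part (t_lead_mono i ms)"
  have T: "total_degree T = total_degree ms" "weight T = weight ms"
    using t_leading_eval_scale_mono[OF df ms]
    unfolding t_leading_def T_def t_degree_def t_weight_def by auto
  obtain R where expand: "eval_mono (scale_subst \<delta>) m = dp_monom (t_lead_mono i m) + (R :: ('v option, 'a) dpoly)"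
    and R: "\<forall>z\<in>Poly_Mapping.keys R. lower_term (total_degree m) (weight m) z"
    using t_leading_eval_scale_mono[OF df m] unfolding t_leading_def by blast
  have "t_coeff T (dp_const c * R) = 0"
  proof (rule t_coeff_eq_0, intro ballI notI)
    fix z
    assume "z \<in> Poly_Mapping.keys (dp_const c * R)" and z: "t_part z = T"
    then have "lower_term (total_degree m) (weight m) z"
      using R keys_dp_const_mult by blast
    with z T max show False
      unfolding lower_term_def t_degree_def t_weight_def by fastforce
  qed
  then have "t_coeff T (dp_const c * eval_mono (scale_subst \<delta>) m) =
      t_coeff T (Poly_Mapping.single (t_lead_mono i m) c)"
    by (simp add: expand ring_distribs t_coeff_add single_eq_dp_const_mult[symmetric])
  moreover have "t_part (t_lead_mono i m) = T \<longleftrightarrow> m = ms"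
    using t_part_t_lead_mono_inj[OF m ms] unfolding T_def by blast
  ultimately show ?thesis
    unfolding T_def by (simp add: t_coeff_single y_part_t_lead_mono)
qed

lemma t_coeff_scale_tY_monomial:
  assumes df: "differential_field \<delta>" and p: "p \<in> dp_sub {i}" "p \<noteq> 0"
  shows "\<exists>T c d. c \<noteq> 0 \<and> t_coeff T (scale_tY \<delta> p :: ('v option, 'a::field) dpoly) =
      Poly_Mapping.single (Poly_Mapping.single (i, 0) d) c"
proof -
  have keys_p: "\<forall>w\<in>Poly_Mapping.keys m. fst w = i" if "m \<in> Poly_Mapping.keys p" for m
    using p(1) that by (simp add: dp_sub_def)
  obtain m0 where m0: "m0 \<in> Poly_Mapping.keys p"
    using p(2) by (metis keys_eq_empty ex_in_conv)
  define S where "S = {m\<in>Poly_Mapping.keys p. total_degree m = total_degree m0}"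
  have "finite S" "m0 \<in> S"
    using m0 unfolding S_def by auto
  then obtain ms where "ms \<in> S" "weight ms = Max (weight ` S)"
    using Max_in[of "weight ` S"] by fastforce
  with \<open>finite S\<close> have ms_max: "weight m \<le> weight ms" if "m \<in> S" for m
    using that by simp
  from \<open>ms \<in> S\<close> have ms: "ms \<in> Poly_Mapping.keys p" and deg_ms: "total_degree ms = total_degree m0"
    unfolding S_def by auto
  define T where "T = t_part (t_lead_mono i ms)"
  have expand: "scale_tY \<delta> p =
      (\<Sum>m\<in>Poly_Mapping.keys p. dp_const (Poly_Mapping.lookup p m) * eval_mono (scale_subst \<delta>) m)"
    by (simp add: scale_tY_eq_dp_subst dp_subst_def eval_mono_def)
  have "t_coeff T (scale_tY \<delta> p) = (\<Sum>m\<in>Poly_Mapping.keys p.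
      if m = ms then Poly_Mapping.single (Poly_Mapping.single (i, 0) (total_degree ms)) (Poly_Mapping.lookup p m)
      else 0)"
    unfolding expand t_coeff_sum T_def
    by (intro sum.cong refl t_coeff_scale_mono[OF df keys_p keys_p[OF ms]])
      (auto simp: S_def deg_ms intro: ms_max)
  also have "\<dots> = Poly_Mapping.single (Poly_Mapping.single (i, 0) (total_degree ms)) (Poly_Mapping.lookup p ms)"
    using ms by simp
  finally show ?thesis
    using ms by (auto simp: in_keys_iff)
qed

lemma dp_var_power: "dp_var i 0 ^ d = (dp_monom (Poly_Mapping.single (i, 0) d) :: ('v, 'a::field) dpoly)"
proof (induction d)
  case (Suc d)
  have "dp_var i 0 ^ Suc d = dp_monom (Poly_Mapping.single (i, 0) d) * (dp_monom (Poly_Mapping.single (i, 0) 1) :: ('v, 'a) dpoly)"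
    unfolding power_Suc2 Suc.IH by (simp only: dp_var_def)
  also have "\<dots> = dp_monom (Poly_Mapping.single (i, 0) (Suc d))"
    by (simp only: mult_single mult_1 single_add[symmetric] Suc_eq_plus1)
  finally show ?case .
qed simp

lemma prime_ideal_power_mem:
  assumes I: "is_prime_ideal I" and "x ^ d \<in> I"
  shows "x \<in> I"
  using assms(2)
proof (induction d)
  case 0
  have "x * 1 \<in> I"
    using I 0 unfolding is_prime_ideal_def is_ideal_def power_0 by blast
  then show ?case
    by simp
next
  case (Suc d)
  have "x * x ^ d \<in> I"
    using Suc.prems by simp
  then have "x \<in> I \<or> x ^ d \<in> I"
    using I unfolding is_prime_ideal_def by blast
  then show ?case
    using Suc.IH by blast
qed

lemma dp_var_mem_if_not_diff_indep:
  assumes df: "differential_field \<delta>" and I: "is_diff_ideal \<delta> I" "is_prime_ideal I" "diff_homogeneous \<delta> I"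
    and p: "p \<in> I" "p \<in> dp_sub {i}" "p \<noteq> 0"
  shows "dp_var i 0 \<in> I"
proof -
  have ideal: "is_ideal I"
    using I(1) unfolding is_diff_ideal_def by simp
  obtain T c d where "c \<noteq> 0"
    and coeff: "t_coeff T (scale_tY \<delta> p) = Poly_Mapping.single (Poly_Mapping.single (i, 0) d) c"
    using t_coeff_scale_tY_monomial[OF df p(2,3)] by blast
  have "scale_tY \<delta> p \<in> extended_ideal I"
    using I(3) p(1) diff_ideal_gen_embed_tY_subset[OF df I(1)] unfolding diff_homogeneous_def by blast
  then have "Poly_Mapping.single (Poly_Mapping.single (i, 0) d) c \<in> I"
    using t_coeff_mem_ideal[OF ideal] coeff by metis
  then have "dp_const (inverse c) * Poly_Mapping.single (Poly_Mapping.single (i, 0) d) c \<in> I"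
    using ideal unfolding is_ideal_def by blast
  also have "dp_const (inverse c) * Poly_Mapping.single (Poly_Mapping.single (i, 0) d) c = dp_var i 0 ^ d"
    using \<open>c \<noteq> 0\<close> by (simp add: dp_var_power dp_const_def mult_single)
  finally show ?thesis
    using prime_ideal_power_mem[OF I(2)] by blast
qed

lemma ex_dp_var_not_mem:
  assumes "is_ideal I" "colon_vars I = I" "I \<noteq> UNIV"
  shows "\<exists>i. dp_var i 0 \<notin> I"
proof (rule ccontr)
  assume "\<not> (\<exists>i. dp_var i 0 \<notin> I)"
  then have "1 \<in> I"
    using assms(2) unfolding colon_vars_def by auto
  have "r \<in> I" for r
  proof -
    have "r * 1 \<in> I"
      using assms(1) \<open>1 \<in> I\<close> unfolding is_ideal_def by blast
    then show ?thesis
      by simp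
  qed
  with assms(3) show False
    by blast
qed

lemma parametric_set_nonempty:
  assumes "I \<inter> dp_sub {i} = {0}" "parametric_set I U"
  shows "U \<noteq> {}"
  using assms unfolding parametric_set_def diff_indep_mod_def by blast

theorem mainTheorem2:
  fixes \<delta> :: "'a::field \<Rightarrow> 'a"
    and I :: "('n::finite, 'a) dpoly set"
  assumes "differential_field \<delta>"
    and "is_diff_ideal \<delta> I"
    and "is_prime_ideal I"
    and "I \<noteq> UNIV"
    and "diff_homogeneous \<delta> I"
  shows "(\<forall>U. parametric_set I U \<longrightarrow> U \<noteq> {}) \<and> (\<exists>i. I \<inter> dp_sub {i} = {0})"
proof -
  have "is_ideal I" "colon_vars I = I"
    using assms(2,5) unfolding is_diff_ideal_def diff_homogeneous_def by simp_all
  then obtain i where i: "dp_var i 0 \<notin> I"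
    using ex_dp_var_not_mem assms(4) by blast
  have "p = 0" if "p \<in> I" "p \<in> dp_sub {i}" for p
    using dp_var_mem_if_not_diff_indep[OF assms(1,2,3,5) that] i by blast
  moreover have "0 \<in> I" "(0 :: ('n, 'a) dpoly) \<in> dp_sub {i}"
    using \<open>is_ideal I\<close> unfolding is_ideal_def dp_sub_def by simp_all
  ultimately have indep: "I \<inter> dp_sub {i} = {0}"
    by blast
  show ?thesis
    using parametric_set_nonempty[OF indep] indep by blast
qed

end
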